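(* Let $\{P^{[n]}\}_{n\in\mathbb{N}}$ be a sequence of equal-neighbor matrices of increasing dimensions ($P^{[n]}\in\mathbb{R}^{n\times n}$). The following are equivalent: (i) there is no $P^{[n]}$-prominent individual; (ii) the sequence is one-time wise; (iii) the sequence is pre-uniformly wise.
   Context: An $n\times n$ matrix $P$ is equal-neighbor if $P=\mathrm{diag}(W\mathbf{1}_n)^{-1}W$ for some symmetric matrix $W\in\{0,1\}^{n\times n}$ with at least one nonzero entry in each row (diagonal entries allowed); equivalently $P_{ij}=1/d_i$ if $W_{ij}=1$ and $0$ otherwise, where $d_i=\sum_jW_{ij}$. $\|P\|_1=\max_j\sum_iP_{ij}$. A $P^{[n]}$-prominent individual is a sequence of nodes $k^{[n]}\in\{1,\dots,n\}$ whose total one-time influence $\frac1n\sum_{i=1}^nP^{[n]}_{ik^{[n]}}$ is of order $1$; "there is no $P^{[n]}$-prominent individual" means: for every sequence $k^{[n]}\in\{1,\dots,n\}$, $\frac1n\sum_{i=1}^nP^{[n]}_{ik^{[n]}}\to0$ as $n\to\infty$. One-time wisdom: for each $n$, $x^{[n]}_i(0)=\mu+\xi^{[n]}_i(0)$ with $\mu\in\mathbb{R}$ fixed and $\xi^{[n]}_i(0)$ independent Gaussian with mean $0$ and common variance $\sigma^2\in(0,\infty)$, $x^{[n]}(1)=P^{[n]}x^{[n]}(0)$; the sequence is one-time wise if $\frac1n\sum_ix^{[n]}_i(1)\to\mu$ in probability. The sequence is pre-uniformly wise if $\lim_{n\to\infty}\sup_{k\in\mathbb{N}}\|\tfrac1n(P^{[n]})^k\|_1=0$.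 *)

theory Defs
  imports "HOL-Probability.Probability"
begin

text \<open>Square matrices of dimension n are represented as functions nat => nat => real,
  with indices ranging over {0..<n} (entries outside this range are irrelevant).
  A sequence of matrices P^[n] is a function P :: nat => nat => nat => real,
  where P n is the n x n matrix P^[n].\<close>

definition equal_neighbor :: "nat \<Rightarrow> (nat \<Rightarrow> nat \<Rightarrow> real) \<Rightarrow> bool" where
  "equal_neighbor n A \<longleftrightarrow>
     (\<exists>W :: nat \<Rightarrow> nat \<Rightarrow> bool.
        (\<forall>i<n. \<forall>j<n. W i j = W j i) \<and>
        (\<forall>i<n. \<exists>j<n. W i j) \<and>
        (\<forall>i<n. \<forall>j<n. A i j = (if W i j then 1 / real (card {l. l < n \<and> W i l}) else 0)))"

fun mat_pow :: "nat \<Rightarrow> (nat \<Rightarrow> nat \<Rightarrow> real) \<Rightarrow> nat \<Rightarrow> nat \<Rightarrow> nat \<Rightarrow> real" where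
  "mat_pow n A 0 = (\<lambda>i j. if i = j then 1 else 0)"
| "mat_pow n A (Suc k) = (\<lambda>i j. \<Sum>l<n. mat_pow n A k i l * A l j)"

definition norm1 :: "nat \<Rightarrow> (nat \<Rightarrow> nat \<Rightarrow> real) \<Rightarrow> real" where
  "norm1 n A = (if n = 0 then 0 else Max ((\<lambda>j. \<Sum>i<n. \<bar>A i j\<bar>) ` {..<n}))"

definition no_prominent_individual :: "(nat \<Rightarrow> nat \<Rightarrow> nat \<Rightarrow> real) \<Rightarrow> bool" where
  "no_prominent_individual P \<longleftrightarrow>
     (\<forall>k :: nat \<Rightarrow> nat. (\<forall>n>0. k n < n) \<longrightarrow>
        (\<lambda>n. (1 / real n) * (\<Sum>i<n. P n i (k n))) \<longlonglongrightarrow> 0)"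

text \<open>One-time wisdom with respect to a given Gaussian realization: for each n,
  xi n i (i < n) are independent N(0, sigma^2) random variables on the probability
  space M n; x_i(0) = mu + xi n i, x(1) = P^[n] x(0); the average of x(1)
  converges to mu in probability.\<close>
definition one_time_wise ::
  "(nat \<Rightarrow> 'a measure) \<Rightarrow> (nat \<Rightarrow> nat \<Rightarrow> 'a \<Rightarrow> real) \<Rightarrow> real \<Rightarrow> (nat \<Rightarrow> nat \<Rightarrow> nat \<Rightarrow> real) \<Rightarrow> bool" where
  "one_time_wise M \<xi> \<mu> P \<longleftrightarrow>
     (\<forall>\<epsilon>>0. (\<lambda>n. measure (M n)
        {\<omega> \<in> space (M n).
           \<bar>(1 / real n) * (\<Sum>i<n. \<Sum>j<n. P n i j * (\<mu> + \<xi> n j \<omega>)) - \<mu>\<bar> > \<epsilon>})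
        \<longlonglongrightarrow> 0)"

definition pre_uniformly_wise :: "(nat \<Rightarrow> nat \<Rightarrow> nat \<Rightarrow> real) \<Rightarrow> bool" where
  "pre_uniformly_wise P \<longleftrightarrow>
     (\<lambda>n. SUP k. norm1 n (\<lambda>i j. mat_pow n (P n) k i j / real n)) \<longlonglongrightarrow> 0"

end

theory Submission
  imports Defs
begin

text \<open>
  Write r_j(B) for the j-th column sum of a matrix B, so that the one-time influence of node j
  is r_j(P)/n; let m_n be the largest influence. All three properties are equivalent to m_n
  tending to 0. For prominence this is immediate, choosing k^[n] as a column of maximal sum. The
  one-step average minus mu is sum_j (r_j/n) xi_j, a centred Gaussian whose variance sigma^2
  sum_j (r_j/n)^2 lies between sigma^2 m_n^2 and sigma^2 m_n, since the influences sum to 1.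
  Finally ||P^k/n||_1 is the largest r_j(P^k)/n: it is 1/n for k = 0, m_n for k = 1, and at most
  sqrt m_n for k >= 1. For the last bound, an equal-neighbor matrix is reversible with respect
  to its degrees d, so the energy sum_l r_l(P^k)^2/d_l does not increase with k and starts at
  sum_l 1/d_l <= n; Cauchy-Schwarz then gives r_j(P^k)^2 <= n r_j(P).
\<close>

definition stochastic :: "nat \<Rightarrow> (nat \<Rightarrow> nat \<Rightarrow> real) \<Rightarrow> bool" where
  "stochastic n A \<longleftrightarrow> (\<forall>i<n. \<forall>j<n. 0 \<le> A i j) \<and> (\<forall>i<n. (\<Sum>j<n. A i j) = 1)"

definition reversible :: "nat \<Rightarrow> (nat \<Rightarrow> nat \<Rightarrow> real) \<Rightarrow> (nat \<Rightarrow> real) \<Rightarrow> bool" where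
  "reversible n A \<pi> \<longleftrightarrow> (\<forall>i<n. 0 < \<pi> i) \<and> (\<forall>i<n. \<forall>j<n. \<pi> i * A i j = \<pi> j * A j i)"

definition col_sum :: "nat \<Rightarrow> (nat \<Rightarrow> nat \<Rightarrow> real) \<Rightarrow> nat \<Rightarrow> real" where
  "col_sum n A j = (\<Sum>i<n. A i j)"

lemma equal_neighbor_degree:
  assumes "equal_neighbor n A"
  obtains d where "stochastic n A" "reversible n A d" "\<And>i. i < n \<Longrightarrow> 1 \<le> d i"
    "\<And>i j. i < n \<Longrightarrow> j < n \<Longrightarrow> d i * A i j \<le> 1"
proof -
  obtain W where sym: "\<forall>i<n. \<forall>j<n. W i j = W j i" and ne: "\<forall>i<n. \<exists>j<n. W i j"
    and A: "\<forall>i<n. \<forall>j<n. A i j = (if W i j then 1 / real (card {l. l < n \<and> W i l}) else 0)"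
    using assms unfolding equal_neighbor_def by blast
  define d where "d i = real (card {l. l < n \<and> W i l})" for i
  have d_ge_1: "1 \<le> d i" if "i < n" for i
    using ne that unfolding d_def by (auto simp: Suc_le_eq card_gt_0_iff)
  have d_sum: "d i = (\<Sum>j<n. if W i j then 1 else 0)" for i
    unfolding d_def by (simp add: sum.If_cases Int_def conj_commute)
  have dA: "d i * A i j = (if W i j then 1 else 0)" if "i < n" "j < n" for i j
    using A d_ge_1[OF that(1)] that unfolding d_def by auto
  show ?thesis
  proof
    show "stochastic n A"
      unfolding stochastic_def
    proof (intro conjI allI impI)
      fix i assume i: "i < n"
      have "(\<Sum>j<n. A i j) = (\<Sum>j<n. (if W i j then 1 else 0) / d i)"
        using dA[OF i] d_ge_1[OF i] by (intro sum.cong) (auto simp: eq_divide_eq mult.commute)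
      also have "\<dots> = 1"
        using d_ge_1[OF i] by (simp flip: sum_divide_distrib d_sum)
      finally show "(\<Sum>j<n. A i j) = 1" .
    qed (use A in auto)
    show "reversible n A d"
      unfolding reversible_def using d_ge_1 dA sym by (auto simp: less_le_trans[OF zero_less_one])
  qed (use d_ge_1 dA in auto)
qed

lemma equal_neighbor_stochastic: "equal_neighbor n A \<Longrightarrow> stochastic n A"
  by (erule equal_neighbor_degree)

lemma sum_weighted_square_le:
  fixes w f :: "'a \<Rightarrow> real"
  assumes "\<And>i. i \<in> I \<Longrightarrow> 0 \<le> w i"
  shows "(\<Sum>i\<in>I. w i * f i)\<^sup>2 \<le> (\<Sum>i\<in>I. w i) * (\<Sum>i\<in>I. w i * (f i)\<^sup>2)"
proof -
  have "(\<Sum>i\<in>I. w i * f i) = (\<Sum>i\<in>I. sqrt (w i) * (sqrt (w i) * f i))"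
    using assms by (intro sum.cong) (auto simp flip: mult.assoc)
  moreover have "(\<Sum>i\<in>I. (sqrt (w i))\<^sup>2) = (\<Sum>i\<in>I. w i)"
    and "(\<Sum>i\<in>I. (sqrt (w i) * f i)\<^sup>2) = (\<Sum>i\<in>I. w i * (f i)\<^sup>2)"
    using assms by (auto intro!: sum.cong simp: power_mult_distrib)
  ultimately show ?thesis
    using Cauchy_Schwarz_ineq_sum[of "\<lambda>i. sqrt (w i)" "\<lambda>i. sqrt (w i) * f i" I] by simp
qed

lemma col_sum_mat_pow_Suc:
  "col_sum n (mat_pow n A (Suc k)) j = (\<Sum>l<n. col_sum n (mat_pow n A k) l * A l j)"
  unfolding col_sum_def by (simp add: sum_distrib_right) (rule sum.swap)

lemma mat_pow_nonneg:
  assumes "stochastic n A" "j < n"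
  shows "0 \<le> mat_pow n A k i j"
  using assms(2)
proof (induction k arbitrary: j)
  case (Suc k)
  then show ?case
    using assms(1) by (auto simp: stochastic_def intro!: sum_nonneg mult_nonneg_nonneg)
qed simp

declare mat_pow.simps(2) [simp del]

text \<open>With g = r/pi, detailed balance turns the column-sum recursion into g' = A g, and Jensen's
  inequality along the rows of A shows that sum_l pi_l g_l^2 cannot increase.\<close>

lemma reversible_col_sum_mat_pow_energy_Suc_le:
  assumes A: "stochastic n A" and \<pi>: "reversible n A \<pi>"
  shows "(\<Sum>j<n. (col_sum n (mat_pow n A (Suc k)) j)\<^sup>2 / \<pi> j)
       \<le> (\<Sum>l<n. (col_sum n (mat_pow n A k) l)\<^sup>2 / \<pi> l)"
proof -
  define g where "g l = col_sum n (mat_pow n A k) l / \<pi> l" for l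
  have \<pi>_pos: "0 < \<pi> i" if "i < n" for i
    using \<pi> that by (simp add: reversible_def)
  have row: "col_sum n (mat_pow n A (Suc k)) j = \<pi> j * (\<Sum>l<n. A j l * g l)" if j: "j < n" for j
  proof -
    have "col_sum n (mat_pow n A k) l * A l j = \<pi> j * (A j l * g l)" if l: "l < n" for l
    proof -
      have "\<pi> l * A l j = \<pi> j * A j l"
        using \<pi> l j by (simp add: reversible_def)
      then show ?thesis
        using \<pi>_pos[OF l] by (simp add: g_def field_simps)
    qed
    then show ?thesis
      by (simp add: col_sum_mat_pow_Suc sum_distrib_left)
  qed
  have "(col_sum n (mat_pow n A (Suc k)) j)\<^sup>2 / \<pi> j \<le> \<pi> j * (\<Sum>l<n. A j l * (g l)\<^sup>2)"
    if j: "j < n" for j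
  proof -
    have "(col_sum n (mat_pow n A (Suc k)) j)\<^sup>2 / \<pi> j = \<pi> j * (\<Sum>l<n. A j l * g l)\<^sup>2"
      using \<pi>_pos[OF j] by (simp add: row[OF j] power2_eq_square)
    also have "\<dots> \<le> \<pi> j * (\<Sum>l<n. A j l * (g l)\<^sup>2)"
      using sum_weighted_square_le[of "{..<n}" "A j" g] A j \<pi>_pos[OF j]
      by (intro mult_left_mono) (auto simp: stochastic_def)
    finally show ?thesis .
  qed
  then have "(\<Sum>j<n. (col_sum n (mat_pow n A (Suc k)) j)\<^sup>2 / \<pi> j)
      \<le> (\<Sum>j<n. \<Sum>l<n. \<pi> j * A j l * (g l)\<^sup>2)"
    by (intro sum_mono) (simp add: sum_distrib_left mult.assoc)
  also have "\<dots> = (\<Sum>l<n. \<pi> l * (\<Sum>j<n. A l j) * (g l)\<^sup>2)"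
    using \<pi> by (subst sum.swap) (auto intro!: sum.cong simp: reversible_def sum_distrib_left sum_distrib_right)
  also have "\<dots> = (\<Sum>l<n. (col_sum n (mat_pow n A k) l)\<^sup>2 / \<pi> l)"
    using A \<pi>_pos by (intro sum.cong) (auto simp: stochastic_def g_def power2_eq_square)
  finally show ?thesis .
qed

lemma reversible_col_sum_mat_pow_energy_le:
  assumes "stochastic n A" "reversible n A \<pi>"
  shows "(\<Sum>l<n. (col_sum n (mat_pow n A k) l)\<^sup>2 / \<pi> l) \<le> (\<Sum>l<n. 1 / \<pi> l)"
proof (induction k)
  case 0
  then show ?case by (intro sum_mono) (simp add: col_sum_def)
next
  case (Suc k)
  then show ?case using reversible_col_sum_mat_pow_energy_Suc_le[OF assms, of k] by linarith
qed

lemma reversible_col_sum_mat_pow_le: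
  assumes A: "stochastic n A" and \<pi>: "reversible n A \<pi>"
    and b: "\<And>i j. i < n \<Longrightarrow> j < n \<Longrightarrow> \<pi> i * A i j \<le> b" and j: "j < n" and k: "0 < k"
  shows "(col_sum n (mat_pow n A k) j)\<^sup>2 \<le> b * (\<Sum>l<n. 1 / \<pi> l) * col_sum n A j"
proof -
  obtain k' where k': "k = Suc k'" using k not0_implies_Suc by blast
  define r where "r l = col_sum n (mat_pow n A k') l" for l
  have \<pi>_pos: "0 < \<pi> i" if "i < n" for i
    using \<pi> that by (simp add: reversible_def)
  have A_nonneg: "0 \<le> A l j" if "l < n" for l
    using A that j by (simp add: stochastic_def)
  have weighted_energy: "(\<Sum>l<n. A l j * (r l)\<^sup>2) \<le> b * (\<Sum>l<n. 1 / \<pi> l)"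
  proof -
    have "A l j * (r l)\<^sup>2 \<le> b * ((r l)\<^sup>2 / \<pi> l)" if l: "l < n" for l
    proof -
      have "\<pi> l * A l j * ((r l)\<^sup>2 / \<pi> l) \<le> b * ((r l)\<^sup>2 / \<pi> l)"
        using b[OF l j] \<pi>_pos[OF l] by (intro mult_right_mono) auto
      then show ?thesis
        using \<pi>_pos[OF l] by simp
    qed
    then have "(\<Sum>l<n. A l j * (r l)\<^sup>2) \<le> (\<Sum>l<n. b * ((r l)\<^sup>2 / \<pi> l))"
      by (intro sum_mono) auto
    also have "\<dots> = b * (\<Sum>l<n. (r l)\<^sup>2 / \<pi> l)"
      by (simp only: sum_distrib_left)
    finally have "(\<Sum>l<n. A l j * (r l)\<^sup>2) \<le> b * (\<Sum>l<n. (r l)\<^sup>2 / \<pi> l)" .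
    moreover have "0 \<le> b"
      using b[OF j j] \<pi>_pos[OF j] A_nonneg[OF j] by (meson mult_nonneg_nonneg less_imp_le order_trans)
    ultimately show ?thesis
      using reversible_col_sum_mat_pow_energy_le[OF A \<pi>, of k'] unfolding r_def
      by (meson mult_left_mono order_trans)
  qed
  have "(col_sum n (mat_pow n A k) j)\<^sup>2 = (\<Sum>l<n. A l j * r l)\<^sup>2"
    by (simp add: k' col_sum_mat_pow_Suc r_def mult.commute)
  also have "\<dots> \<le> col_sum n A j * (\<Sum>l<n. A l j * (r l)\<^sup>2)"
    using sum_weighted_square_le[of "{..<n}" "\<lambda>l. A l j" r] A_nonneg by (simp add: col_sum_def)
  also have "\<dots> \<le> col_sum n A j * (b * (\<Sum>l<n. 1 / \<pi> l))"
    using weighted_energy A_nonneg by (intro mult_left_mono) (auto simp: col_sum_def intro: sum_nonneg)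
  finally show ?thesis
    by (simp only: ac_simps)
qed

lemma reversible_col_sum_pos:
  assumes A: "stochastic n A" and \<pi>: "reversible n A \<pi>" and j: "j < n"
  shows "0 < col_sum n A j"
proof -
  have "\<exists>l<n. A j l \<noteq> 0"
  proof (rule ccontr)
    assume "\<not> (\<exists>l<n. A j l \<noteq> 0)"
    then have "(\<Sum>l<n. A j l) = 0" by simp
    with A j show False by (simp add: stochastic_def)
  qed
  then obtain l where l: "l < n" "0 < A j l"
    using A j by (force simp: stochastic_def order.order_iff_strict)
  have "\<pi> l * A l j = \<pi> j * A j l"
    using \<pi> l(1) j by (simp add: reversible_def)
  moreover have "0 < \<pi> j" "0 < \<pi> l"
    using \<pi> l(1) j by (auto simp: reversible_def)
  ultimately have "0 < A l j"
    using l(2) by (metis mult_pos_pos zero_less_mult_pos)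
  also have "A l j \<le> col_sum n A j"
    unfolding col_sum_def using A l(1) j by (intro member_le_sum) (auto simp: stochastic_def)
  finally show ?thesis .
qed

lemma equal_neighbor_col_sum_pos:
  assumes "equal_neighbor n A" "j < n"
  shows "0 < col_sum n A j"
proof -
  obtain d where "stochastic n A" "reversible n A d"
    by (rule equal_neighbor_degree[OF assms(1)])
  then show ?thesis
    using assms(2) by (rule reversible_col_sum_pos)
qed

lemma equal_neighbor_col_sum_mat_pow_le:
  assumes "equal_neighbor n A" "j < n" "0 < k"
  shows "(col_sum n (mat_pow n A k) j)\<^sup>2 \<le> real n * col_sum n A j"
proof -
  obtain d where A: "stochastic n A" and d: "reversible n A d" "\<And>i. i < n \<Longrightarrow> 1 \<le> d i"
    "\<And>i j. i < n \<Longrightarrow> j < n \<Longrightarrow> d i * A i j \<le> 1"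
    using equal_neighbor_degree[OF assms(1)] by blast
  have "(\<Sum>l<n. 1 / d l) \<le> (\<Sum>l<n. 1)"
    by (intro sum_mono) (use d(2) in \<open>auto simp: divide_le_eq_1\<close>)
  moreover have "0 \<le> col_sum n A j"
    using equal_neighbor_col_sum_pos[OF assms(1,2)] by simp
  ultimately show ?thesis
    using reversible_col_sum_mat_pow_le[OF A d(1) d(3) assms(2,3)]
    by (simp add: mult_right_mono order_trans)
qed

definition influence :: "nat \<Rightarrow> (nat \<Rightarrow> nat \<Rightarrow> real) \<Rightarrow> nat \<Rightarrow> real" where
  "influence n A j = col_sum n A j / real n"

definition max_influence :: "nat \<Rightarrow> (nat \<Rightarrow> nat \<Rightarrow> real) \<Rightarrow> real" where
  "max_influence n A = (if n = 0 then 0 else Max (influence n A ` {..<n}))"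

lemma influence_le_max_influence: "j < n \<Longrightarrow> influence n A j \<le> max_influence n A"
  unfolding max_influence_def by (auto intro: Max_ge)

lemma max_influence_attained:
  assumes "0 < n"
  obtains j where "j < n" "influence n A j = max_influence n A"
proof -
  have "Max (influence n A ` {..<n}) \<in> influence n A ` {..<n}"
    using assms by (intro Max_in) auto
  with assms that show thesis unfolding max_influence_def by auto
qed

lemma max_influence_le:
  "(\<And>j. j < n \<Longrightarrow> influence n A j \<le> c) \<Longrightarrow> 0 < n \<Longrightarrow> max_influence n A \<le> c"
  by (metis max_influence_attained)

lemma max_influence_nonneg:
  assumes "stochastic n A"
  shows "0 \<le> max_influence n A"
proof (cases "n = 0")
  case False
  then obtain j where "j < n" "influence n A j = max_influence n A"
    using max_influence_attained by blast
  with assms show ?thesis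
    unfolding influence_def col_sum_def stochastic_def
    by (metis divide_nonneg_nonneg of_nat_0_le_iff sum_nonneg lessThan_iff)
qed (simp add: max_influence_def)

lemma stochastic_sum_col_sum: "stochastic n A \<Longrightarrow> (\<Sum>j<n. col_sum n A j) = real n"
  unfolding col_sum_def stochastic_def by (subst sum.swap) simp

lemma stochastic_sum_influence_squared_bounds:
  assumes A: "stochastic n A" and n: "0 < n"
  shows "(max_influence n A)\<^sup>2 \<le> (\<Sum>j<n. (influence n A j)\<^sup>2)"
    and "(\<Sum>j<n. (influence n A j)\<^sup>2) \<le> max_influence n A"
proof -
  have nonneg: "0 \<le> influence n A j" if "j < n" for j
    using A that by (auto simp: influence_def col_sum_def stochastic_def intro!: sum_nonneg divide_nonneg_nonneg)
  have total: "(\<Sum>j<n. influence n A j) = 1"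
    using stochastic_sum_col_sum[OF A] n by (simp add: influence_def flip: sum_divide_distrib)
  obtain j where j: "j < n" "influence n A j = max_influence n A"
    using max_influence_attained[OF n] by blast
  have "(influence n A j)\<^sup>2 \<le> (\<Sum>j<n. (influence n A j)\<^sup>2)"
    using j(1) by (intro member_le_sum) auto
  with j(2) show "(max_influence n A)\<^sup>2 \<le> (\<Sum>j<n. (influence n A j)\<^sup>2)"
    by simp
  have "(\<Sum>j<n. (influence n A j)\<^sup>2) \<le> (\<Sum>j<n. influence n A j * max_influence n A)"
    using nonneg influence_le_max_influence
    by (intro sum_mono) (simp add: power2_eq_square mult_left_mono)
  also have "\<dots> = max_influence n A"
    by (simp only: total flip: sum_distrib_right)
  finally show "(\<Sum>j<n. (influence n A j)\<^sup>2) \<le> max_influence n A" .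
qed

lemma stochastic_average_deviation:
  assumes "stochastic n A" "0 < n"
  shows "(1 / real n) * (\<Sum>i<n. \<Sum>j<n. A i j * (\<mu> + x j)) - \<mu> = (\<Sum>j<n. influence n A j * x j)"
proof -
  have "(\<Sum>i<n. \<Sum>j<n. A i j * (\<mu> + x j))
      = (\<Sum>i<n. \<mu> * (\<Sum>j<n. A i j)) + (\<Sum>i<n. \<Sum>j<n. A i j * x j)"
    by (simp add: distrib_left sum.distrib sum_distrib_left mult.commute)
  also have "(\<Sum>i<n. \<mu> * (\<Sum>j<n. A i j)) = real n * \<mu>"
    using assms(1) by (simp add: stochastic_def)
  also have "(\<Sum>i<n. \<Sum>j<n. A i j * x j) = (\<Sum>j<n. col_sum n A j * x j)"
    unfolding col_sum_def by (subst sum.swap) (simp add: sum_distrib_right)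
  also have "\<dots> = real n * (\<Sum>j<n. influence n A j * x j)"
    using assms(2) by (simp add: influence_def sum_distrib_left)
  finally show ?thesis
    using assms(2) by (simp add: field_simps)
qed

lemma norm1_scaled_eq_max_influence:
  assumes "\<And>i j. i < n \<Longrightarrow> j < n \<Longrightarrow> 0 \<le> B i j"
  shows "norm1 n (\<lambda>i j. B i j / real n) = max_influence n B"
proof -
  have "(\<Sum>i<n. \<bar>B i j / real n\<bar>) = influence n B j" if "j < n" for j
    using assms that by (simp add: influence_def col_sum_def sum_divide_distrib)
  then show ?thesis
    unfolding norm1_def max_influence_def by (metis (no_types, lifting) image_cong lessThan_iff)
qed

lemma max_influence_mat_pow_0:
  assumes "0 < n"
  shows "max_influence n (mat_pow n A 0) = 1 / real n"
proof -
  have "influence n (mat_pow n A 0) ` {..<n} = {1 / real n}"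
    using assms by (force simp: influence_def col_sum_def)
  then show ?thesis
    using assms by (simp add: max_influence_def)
qed

lemma max_influence_mat_pow_1: "max_influence n (mat_pow n A 1) = max_influence n A"
proof -
  have "col_sum n (mat_pow n A 1) j = col_sum n A j" for j
    by (simp add: col_sum_mat_pow_Suc) (simp add: col_sum_def)
  then show ?thesis
    by (simp add: max_influence_def influence_def)
qed

lemma equal_neighbor_max_influence_mat_pow_le:
  assumes EN: "equal_neighbor n A" and k: "0 < k"
  shows "max_influence n (mat_pow n A k) \<le> sqrt (max_influence n A)"
proof (cases "n = 0")
  case False
  show ?thesis
  proof (rule max_influence_le)
    fix j assume j: "j < n"
    have "(influence n (mat_pow n A k) j)\<^sup>2 \<le> influence n A j"
      using equal_neighbor_col_sum_mat_pow_le[OF EN j k] False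
      by (simp add: influence_def divide_le_eq power2_eq_square field_simps)
    also have "\<dots> \<le> max_influence n A"
      using j by (rule influence_le_max_influence)
    finally show "influence n (mat_pow n A k) j \<le> sqrt (max_influence n A)"
      by (rule real_le_rsqrt)
  qed (use False in simp)
qed (simp add: max_influence_def)

lemma equal_neighbor_SUP_max_influence_mat_pow:
  assumes EN: "equal_neighbor n A" and n: "0 < n"
  shows "max_influence n A \<le> (SUP k. max_influence n (mat_pow n A k))"
    and "(SUP k. max_influence n (mat_pow n A k)) \<le> max (1 / real n) (sqrt (max_influence n A))"
proof -
  have ub: "max_influence n (mat_pow n A k) \<le> max (1 / real n) (sqrt (max_influence n A))" for k
    using max_influence_mat_pow_0[OF n, of A] equal_neighbor_max_influence_mat_pow_le[OF EN, of k]
    by (cases "k = 0") auto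
  then have "bdd_above (range (\<lambda>k. max_influence n (mat_pow n A k)))"
    by (intro bdd_aboveI2)
  then have "max_influence n (mat_pow n A 1) \<le> (SUP k. max_influence n (mat_pow n A k))"
    by (rule cSUP_upper[OF UNIV_I])
  then show "max_influence n A \<le> (SUP k. max_influence n (mat_pow n A k))"
    by (metis max_influence_mat_pow_1)
  show "(SUP k. max_influence n (mat_pow n A k)) \<le> max (1 / real n) (sqrt (max_influence n A))"
    using ub by (intro cSUP_least) auto
qed

lemma no_prominent_individual_iff_max_influence:
  assumes P: "\<And>n. stochastic n (P n)"
  shows "no_prominent_individual P \<longleftrightarrow> (\<lambda>n. max_influence n (P n)) \<longlonglongrightarrow> 0"
proof -
  have avg: "(1 / real n) * (\<Sum>i<n. P n i j) = influence n (P n) j" for n j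
    by (simp add: influence_def col_sum_def)
  show ?thesis
  proof
    assume "no_prominent_individual P"
    define k where "k n = (SOME j. j < n \<and> influence n (P n) j = max_influence n (P n))" for n
    have k: "k n < n \<and> influence n (P n) (k n) = max_influence n (P n)" if "0 < n" for n
      unfolding k_def by (rule someI_ex) (use max_influence_attained[OF that] in blast)
    then have "(\<lambda>n. influence n (P n) (k n)) \<longlonglongrightarrow> 0"
      using \<open>no_prominent_individual P\<close> unfolding no_prominent_individual_def avg by blast
    moreover have "influence n (P n) (k n) = max_influence n (P n)" for n
      using k[of n] by (cases "n = 0") (auto simp: influence_def max_influence_def)
    ultimately show "(\<lambda>n. max_influence n (P n)) \<longlonglongrightarrow> 0" by simp
  next
    assume lim: "(\<lambda>n. max_influence n (P n)) \<longlonglongrightarrow> 0"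
    show "no_prominent_individual P"
      unfolding no_prominent_individual_def avg
    proof (intro allI impI)
      fix k :: "nat \<Rightarrow> nat" assume k: "\<forall>n>0. k n < n"
      have "0 \<le> influence n (P n) (k n)" for n
        using P[of n] k unfolding influence_def col_sum_def stochastic_def
        by (cases "n = 0") (auto intro!: divide_nonneg_nonneg sum_nonneg)
      moreover have "influence n (P n) (k n) \<le> max_influence n (P n)" for n
        using k influence_le_max_influence[of "k n" n "P n"]
        by (cases "n = 0") (auto simp: influence_def max_influence_def)
      ultimately show "(\<lambda>n. influence n (P n) (k n)) \<longlonglongrightarrow> 0"
        by (intro tendsto_sandwich[OF _ _ tendsto_const lim]) auto
    qed
  qed
qed

lemma pre_uniformly_wise_iff_max_influence:
  assumes EN: "\<And>n. equal_neighbor n (P n)"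
  shows "pre_uniformly_wise P \<longleftrightarrow> (\<lambda>n. max_influence n (P n)) \<longlonglongrightarrow> 0"
proof -
  define S where "S n = (SUP k. max_influence n (mat_pow n (P n) k))" for n
  have "norm1 n (\<lambda>i j. mat_pow n (P n) k i j / real n) = max_influence n (mat_pow n (P n) k)" for n k
    using mat_pow_nonneg[OF equal_neighbor_stochastic[OF EN]] by (rule norm1_scaled_eq_max_influence)
  then have wise_iff: "pre_uniformly_wise P \<longleftrightarrow> S \<longlonglongrightarrow> 0"
    by (simp add: pre_uniformly_wise_def S_def[abs_def])
  have lower: "\<forall>\<^sub>F n in sequentially. max_influence n (P n) \<le> S n"
    using eventually_gt_at_top[of 0]
    by eventually_elim (unfold S_def, rule equal_neighbor_SUP_max_influence_mat_pow(1)[OF EN])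
  have upper: "\<forall>\<^sub>F n in sequentially. S n \<le> max (1 / real n) (sqrt (max_influence n (P n)))"
    using eventually_gt_at_top[of 0]
    by eventually_elim (unfold S_def, rule equal_neighbor_SUP_max_influence_mat_pow(2)[OF EN])
  have nonneg: "0 \<le> max_influence n (P n)" for n
    by (rule max_influence_nonneg[OF equal_neighbor_stochastic[OF EN]])
  show ?thesis
  proof
    assume "pre_uniformly_wise P"
    then show "(\<lambda>n. max_influence n (P n)) \<longlonglongrightarrow> 0"
      using wise_iff nonneg
      by (intro tendsto_sandwich[OF _ lower tendsto_const]) auto
  next
    assume "(\<lambda>n. max_influence n (P n)) \<longlonglongrightarrow> 0"
    then have "(\<lambda>n. max (1 / real n) (sqrt (max_influence n (P n)))) \<longlonglongrightarrow> 0"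
      using tendsto_max[OF lim_const_over_n tendsto_real_sqrt] by fastforce
    moreover have "\<forall>\<^sub>F n in sequentially. 0 \<le> S n"
      using lower by (rule eventually_mono) (use nonneg order_trans in blast)
    ultimately show "pre_uniformly_wise P"
      using wise_iff tendsto_sandwich[OF _ upper tendsto_const] by blast
  qed
qed

definition std_normal_tail :: "real \<Rightarrow> real" where
  "std_normal_tail t = measure (density lborel std_normal_density) {x. t < \<bar>x\<bar>}"

lemma std_normal_tail_antimono: "t1 \<le> t2 \<Longrightarrow> std_normal_tail t2 \<le> std_normal_tail t1"
proof -
  assume "t1 \<le> t2"
  interpret prob_space "density lborel std_normal_density"
    by (rule prob_space_normal_density) simp
  show ?thesis
    unfolding std_normal_tail_def using \<open>t1 \<le> t2\<close> by (intro finite_measure_mono) auto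
qed

lemma std_normal_tail_pos: "0 < std_normal_tail t"
proof (rule ccontr)
  let ?A = "{x::real. t < \<bar>x\<bar>}"
  interpret prob_space "density lborel std_normal_density"
    by (rule prob_space_normal_density) simp
  assume "\<not> 0 < std_normal_tail t"
  then have "?A \<in> null_sets (density lborel std_normal_density)"
    unfolding std_normal_tail_def by (intro null_setsI) (auto simp: emeasure_eq_measure zero_less_measure_iff)
  then have "AE x in lborel. x \<in> ?A \<longrightarrow> std_normal_density x = 0"
    by (subst (asm) null_sets_density_iff) auto
  moreover have "std_normal_density x \<noteq> 0" for x
    using normal_density_pos[of 1 0 x] by simp
  ultimately have "AE x in lborel. x \<notin> ?A"
    by (auto elim: eventually_mono)
  then have "emeasure lborel ?A = 0"
    by (subst (asm) AE_iff_null_sets[symmetric]) auto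
  moreover have "emeasure lborel {\<bar>t\<bar> + 1 .. \<bar>t\<bar> + 2} \<le> emeasure lborel ?A"
    by (intro emeasure_mono) auto
  ultimately show False
    by simp
qed

lemma std_normal_tail_tendsto_0: "(std_normal_tail \<longlongrightarrow> 0) at_top"
proof -
  interpret prob_space "density lborel std_normal_density"
    by (rule prob_space_normal_density) simp
  have "(\<lambda>m. std_normal_tail (real m)) \<longlonglongrightarrow>
      measure (density lborel std_normal_density) (\<Inter>m. {x. real m < \<bar>x\<bar>})"
    unfolding std_normal_tail_def
    by (intro finite_Lim_measure_decseq) (auto simp: decseq_def)
  moreover have "(\<Inter>m. {x::real. real m < \<bar>x\<bar>}) = {}"
  proof -
    have "x \<notin> (\<Inter>m. {x. real m < \<bar>x\<bar>})" for x :: real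
    proof -
      obtain m where "\<bar>x\<bar> < real m"
        using reals_Archimedean2 by blast
      then have "\<not> real m < \<bar>x\<bar>" by simp
      then show ?thesis by blast
    qed
    then show ?thesis by blast
  qed
  ultimately have lim_nat: "(\<lambda>m. std_normal_tail (real m)) \<longlonglongrightarrow> 0"
    by simp
  show ?thesis
  proof (rule order_tendstoI)
    fix a :: real
    assume "a < 0"
    then show "\<forall>\<^sub>F t in at_top. a < std_normal_tail t"
      using std_normal_tail_pos by (intro always_eventually) (auto intro: less_trans)
  next
    fix a :: real
    assume "0 < a"
    then obtain m where "std_normal_tail (real m) < a"
      using order_tendstoD(2)[OF lim_nat \<open>0 < a\<close>] by (auto simp: eventually_sequentially)
    then have "std_normal_tail t < a" if "real m \<le> t" for t
      using std_normal_tail_antimono[OF that] by linarith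
    then show "\<forall>\<^sub>F t in at_top. std_normal_tail t < a"
      by (rule eventually_mono[OF eventually_ge_at_top[of "real m"]])
  qed
qed

lemma std_normal_tail_scaled_tendsto_0_iff:
  fixes s :: "nat \<Rightarrow> real"
  assumes pos: "\<forall>\<^sub>F n in sequentially. 0 < s n"
  shows "(\<forall>\<epsilon>>0. (\<lambda>n. std_normal_tail (\<epsilon> / s n)) \<longlonglongrightarrow> 0) \<longleftrightarrow> s \<longlonglongrightarrow> 0"
proof
  assume "\<forall>\<epsilon>>0. (\<lambda>n. std_normal_tail (\<epsilon> / s n)) \<longlonglongrightarrow> 0"
  then have lim: "(\<lambda>n. std_normal_tail (1 / s n)) \<longlonglongrightarrow> 0"
    by simp
  show "s \<longlonglongrightarrow> 0"
  proof (rule order_tendstoI)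
    fix a :: real
    assume "a < 0"
    then show "\<forall>\<^sub>F n in sequentially. a < s n"
      using pos by (auto elim: eventually_mono)
  next
    fix a :: real
    assume "0 < a"
    have "\<forall>\<^sub>F n in sequentially. std_normal_tail (1 / s n) < std_normal_tail (1 / a)"
      by (rule order_tendstoD(2)[OF lim std_normal_tail_pos])
    then show "\<forall>\<^sub>F n in sequentially. s n < a"
      using pos
    proof eventually_elim
      case (elim n)
      show ?case
      proof (rule ccontr)
        assume "\<not> s n < a"
        then have "1 / s n \<le> 1 / a"
          using \<open>0 < a\<close> by (simp add: frac_le)
        then show False
          using elim(1) std_normal_tail_antimono by (meson not_le)
      qed
    qed
  qed
next
  assume "s \<longlonglongrightarrow> 0"
  then have inv: "filterlim (\<lambda>n. inverse (s n)) at_top sequentially"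
    using pos by (rule filterlim_inverse_at_top)
  show "\<forall>\<epsilon>>0. (\<lambda>n. std_normal_tail (\<epsilon> / s n)) \<longlonglongrightarrow> 0"
  proof (intro allI impI)
    fix \<epsilon> :: real
    assume "0 < \<epsilon>"
    have "filterlim (\<lambda>n. \<epsilon> * inverse (s n)) at_top sequentially"
      using \<open>0 < \<epsilon>\<close> by (intro filterlim_tendsto_pos_mult_at_top[OF tendsto_const _ inv])
    then have "filterlim (\<lambda>n. \<epsilon> / s n) at_top sequentially"
      by (simp add: divide_inverse)
    then show "(\<lambda>n. std_normal_tail (\<epsilon> / s n)) \<longlonglongrightarrow> 0"
      by (rule filterlim_compose[OF std_normal_tail_tendsto_0])
  qed
qed

lemma (in prob_space) measure_abs_gt_normal:
  assumes Z: "distributed M lborel Z (normal_density 0 s)" and s: "0 < s"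
  shows "prob {\<omega> \<in> space M. \<epsilon> < \<bar>Z \<omega>\<bar>} = std_normal_tail (\<epsilon> / s)"
proof -
  have std: "distributed M lborel (\<lambda>\<omega>. Z \<omega> / s) std_normal_density"
    using Z normal_standard_normal_convert[OF s] by simp
  have "\<epsilon> / s < \<bar>Z \<omega> / s\<bar> \<longleftrightarrow> \<epsilon> < \<bar>Z \<omega>\<bar>" for \<omega>
    using s by (simp add: abs_divide divide_less_cancel)
  then have "{\<omega> \<in> space M. \<epsilon> < \<bar>Z \<omega>\<bar>} = (\<lambda>\<omega>. Z \<omega> / s) -` {x. \<epsilon> / s < \<bar>x\<bar>} \<inter> space M"
    by auto
  also have "prob \<dots> = measure (distr M lborel (\<lambda>\<omega>. Z \<omega> / s)) {x. \<epsilon> / s < \<bar>x\<bar>}"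
    by (rule measure_distr[OF distributed_measurable[OF std], symmetric]) measurable
  finally show ?thesis
    unfolding std_normal_tail_def distributed_distr_eq_density[OF std] .
qed

lemma (in prob_space) weighted_sum_indep_normal:
  assumes "finite I" "I \<noteq> {}" and indep: "indep_vars (\<lambda>_. borel) X I"
    and X: "\<And>i. i \<in> I \<Longrightarrow> distributed M lborel (X i) (normal_density 0 \<sigma>)"
    and \<sigma>: "0 < \<sigma>" and a: "\<And>i. i \<in> I \<Longrightarrow> a i \<noteq> 0"
  shows "distributed M lborel (\<lambda>\<omega>. \<Sum>i\<in>I. a i * X i \<omega>)
           (normal_density 0 (\<sigma> * sqrt (\<Sum>i\<in>I. (a i)\<^sup>2)))"
proof -
  have "distributed M lborel (\<lambda>\<omega>. \<Sum>i\<in>I. a i * X i \<omega>)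
      (normal_density (\<Sum>i\<in>I. 0) (sqrt (\<Sum>i\<in>I. (\<bar>a i\<bar> * \<sigma>)\<^sup>2)))"
  proof (rule sum_indep_normal)
    show "indep_vars (\<lambda>_. borel) (\<lambda>i \<omega>. a i * X i \<omega>) I"
      using indep_vars_compose2[OF indep, of "\<lambda>i x. a i * x" "\<lambda>_. borel"] by simp
    show "distributed M lborel (\<lambda>\<omega>. a i * X i \<omega>) (normal_density 0 (\<bar>a i\<bar> * \<sigma>))"
      if "i \<in> I" for i
      using normal_density_affine[OF X[OF that] \<sigma> a[OF that], of 0] by simp
  qed (use assms(1,2) a \<sigma> in auto)
  moreover have "(\<Sum>i\<in>I. (\<bar>a i\<bar> * \<sigma>)\<^sup>2) = \<sigma>\<^sup>2 * (\<Sum>i\<in>I. (a i)\<^sup>2)"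
    by (simp add: power_mult_distrib sum_distrib_left mult.commute)
  ultimately show ?thesis
    using \<sigma> by (simp add: real_sqrt_mult)
qed

lemma equal_neighbor_sum_influence_squared_pos:
  assumes EN: "equal_neighbor n A" and n: "0 < n"
  shows "0 < (\<Sum>j<n. (influence n A j)\<^sup>2)"
proof -
  have "0 < (influence n A j)\<^sup>2" if "j < n" for j
    using equal_neighbor_col_sum_pos[OF EN that] n by (simp add: influence_def)
  with n show ?thesis
    by (intro sum_pos) auto
qed

lemma (in prob_space) equal_neighbor_average_deviation_tail:
  assumes EN: "equal_neighbor n A" and n: "0 < n" and \<sigma>: "0 < \<sigma>"
    and indep: "indep_vars (\<lambda>_. borel) \<xi> {..<n}"
    and gauss: "\<And>i. i < n \<Longrightarrow> distributed M lborel (\<xi> i) (normal_density 0 \<sigma>)"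
  shows "prob {\<omega> \<in> space M. \<bar>(1 / real n) * (\<Sum>i<n. \<Sum>j<n. A i j * (\<mu> + \<xi> j \<omega>)) - \<mu>\<bar> > \<epsilon>}
    = std_normal_tail (\<epsilon> / (\<sigma> * sqrt (\<Sum>j<n. (influence n A j)\<^sup>2)))"
proof -
  have "influence n A j \<noteq> 0" if "j < n" for j
    using equal_neighbor_col_sum_pos[OF EN that] n by (simp add: influence_def)
  then have "distributed M lborel (\<lambda>\<omega>. \<Sum>j<n. influence n A j * \<xi> j \<omega>)
      (normal_density 0 (\<sigma> * sqrt (\<Sum>j<n. (influence n A j)\<^sup>2)))"
    by (rule_tac weighted_sum_indep_normal)
      (use n indep gauss \<sigma> in \<open>simp_all add: lessThan_empty_iff\<close>)
  moreover have "0 < \<sigma> * sqrt (\<Sum>j<n. (influence n A j)\<^sup>2)"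
    using \<sigma> equal_neighbor_sum_influence_squared_pos[OF EN n] by simp
  ultimately have "prob {\<omega> \<in> space M. \<epsilon> < \<bar>\<Sum>j<n. influence n A j * \<xi> j \<omega>\<bar>}
      = std_normal_tail (\<epsilon> / (\<sigma> * sqrt (\<Sum>j<n. (influence n A j)\<^sup>2)))"
    by (rule measure_abs_gt_normal)
  then show ?thesis
    unfolding stochastic_average_deviation[OF equal_neighbor_stochastic[OF EN] n] .
qed

lemma sqrt_sum_influence_squared_tendsto_0_iff:
  assumes P: "\<And>n. stochastic n (P n)"
  shows "(\<lambda>n. sqrt (\<Sum>j<n. (influence n (P n) j)\<^sup>2)) \<longlonglongrightarrow> 0
    \<longleftrightarrow> (\<lambda>n. max_influence n (P n)) \<longlonglongrightarrow> 0"
proof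
  have "\<forall>\<^sub>F n in sequentially. max_influence n (P n) \<le> sqrt (\<Sum>j<n. (influence n (P n) j)\<^sup>2)"
    using eventually_gt_at_top[of 0]
  proof eventually_elim
    case (elim n)
    then show ?case
      using stochastic_sum_influence_squared_bounds(1)[OF P elim] max_influence_nonneg[OF P]
      by (simp add: real_le_rsqrt)
  qed
  moreover assume "(\<lambda>n. sqrt (\<Sum>j<n. (influence n (P n) j)\<^sup>2)) \<longlonglongrightarrow> 0"
  ultimately show "(\<lambda>n. max_influence n (P n)) \<longlonglongrightarrow> 0"
    by (rule tendsto_sandwich[OF always_eventually[OF allI[OF max_influence_nonneg[OF P]]] _ tendsto_const])
next
  assume lim: "(\<lambda>n. max_influence n (P n)) \<longlonglongrightarrow> 0"
  define v where "v n = (\<Sum>j<n. (influence n (P n) j)\<^sup>2)" for n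
  have lower: "\<forall>\<^sub>F n in sequentially. 0 \<le> v n"
    by (simp add: v_def sum_nonneg)
  have upper: "\<forall>\<^sub>F n in sequentially. v n \<le> max_influence n (P n)"
    using eventually_gt_at_top[of 0]
  proof eventually_elim
    case (elim n)
    then show ?case
      using stochastic_sum_influence_squared_bounds(2)[OF P elim] by (simp add: v_def)
  qed
  have "v \<longlonglongrightarrow> 0"
    by (rule tendsto_sandwich[OF lower upper tendsto_const lim])
  then show "(\<lambda>n. sqrt (\<Sum>j<n. (influence n (P n) j)\<^sup>2)) \<longlonglongrightarrow> 0"
    using tendsto_real_sqrt[of v 0] by (simp add: v_def)
qed

lemma one_time_wise_iff_max_influence:
  assumes EN: "\<And>n. equal_neighbor n (P n)" and \<sigma>: "0 < \<sigma>"
    and prob: "\<And>n. prob_space (M n)"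
    and indep: "\<And>n. prob_space.indep_vars (M n) (\<lambda>_. borel) (\<xi> n) {..<n}"
    and gauss: "\<And>n i. i < n \<Longrightarrow> distributed (M n) lborel (\<xi> n i) (normal_density 0 \<sigma>)"
  shows "one_time_wise M \<xi> \<mu> P \<longleftrightarrow> (\<lambda>n. max_influence n (P n)) \<longlonglongrightarrow> 0"
proof -
  define s where "s n = \<sigma> * sqrt (\<Sum>j<n. (influence n (P n) j)\<^sup>2)" for n
  have "one_time_wise M \<xi> \<mu> P \<longleftrightarrow> (\<forall>\<epsilon>>0. (\<lambda>n. std_normal_tail (\<epsilon> / s n)) \<longlonglongrightarrow> 0)"
    unfolding one_time_wise_def
  proof (intro all_cong1 imp_cong refl tendsto_cong)
    show "\<forall>\<^sub>F n in sequentially. measure (M n) {\<omega> \<in> space (M n).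
        \<bar>(1 / real n) * (\<Sum>i<n. \<Sum>j<n. P n i j * (\<mu> + \<xi> n j \<omega>)) - \<mu>\<bar> > \<epsilon>}
      = std_normal_tail (\<epsilon> / s n)" for \<epsilon>
      using eventually_gt_at_top[of 0]
      by eventually_elim
        (unfold s_def, rule prob_space.equal_neighbor_average_deviation_tail[OF prob EN _ \<sigma> indep gauss])
  qed
  also have "\<dots> \<longleftrightarrow> s \<longlonglongrightarrow> 0"
  proof (rule std_normal_tail_scaled_tendsto_0_iff)
    have "0 < s n" if "0 < n" for n
      using \<sigma> equal_neighbor_sum_influence_squared_pos[OF EN that] by (simp add: s_def)
    then show "\<forall>\<^sub>F n in sequentially. 0 < s n"
      by (rule eventually_mono[OF eventually_gt_at_top[of 0]])
  qed
  also have "\<dots> \<longleftrightarrow> (\<lambda>n. sqrt (\<Sum>j<n. (influence n (P n) j)\<^sup>2)) \<longlonglongrightarrow> 0"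
    using tendsto_mult_left_iff[of \<sigma> "\<lambda>n. sqrt (\<Sum>j<n. (influence n (P n) j)\<^sup>2)" 0] \<sigma>
    by (simp add: s_def[abs_def])
  also have "\<dots> \<longleftrightarrow> (\<lambda>n. max_influence n (P n)) \<longlonglongrightarrow> 0"
    by (rule sqrt_sum_influence_squared_tendsto_0_iff[OF equal_neighbor_stochastic[OF EN]])
  finally show ?thesis .
qed

theorem theorem6:
  fixes P :: "nat \<Rightarrow> nat \<Rightarrow> nat \<Rightarrow> real"
    and M :: "nat \<Rightarrow> 'a measure"
    and \<xi> :: "nat \<Rightarrow> nat \<Rightarrow> 'a \<Rightarrow> real"
    and \<mu> \<sigma> :: real
  assumes EN: "\<And>n. equal_neighbor n (P n)"
    and sigma_pos: "\<sigma> > 0"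
    and prob: "\<And>n. prob_space (M n)"
    and indep: "\<And>n. prob_space.indep_vars (M n) (\<lambda>_. borel) (\<xi> n) {..<n}"
    and gauss: "\<And>n i. i < n \<Longrightarrow> distributed (M n) lborel (\<xi> n i) (normal_density 0 \<sigma>)"
  shows "(no_prominent_individual P \<longleftrightarrow> one_time_wise M \<xi> \<mu> P)
       \<and> (one_time_wise M \<xi> \<mu> P \<longleftrightarrow> pre_uniformly_wise P)"
  using no_prominent_individual_iff_max_influence[OF equal_neighbor_stochastic[OF EN]]
    one_time_wise_iff_max_influence[OF EN sigma_pos prob indep gauss]
    pre_uniformly_wise_iff_max_influence[OF EN]
  by blast

end
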